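(* Let $G$ be a graph (without multiple edges) on the node set $\{1,\dots,N\}$, where $N=n_1+n_2$ with $n_1,n_2\ge 2$ and $N\ge 4$, and assign to each edge $(i,j)\in G$ a fixed real weight $w_{ij}$ (not depending on the labels). Let the labels $(g_1,\dots,g_N)\in\{0,1\}^N$ be drawn uniformly at random among all binary vectors with exactly $n_1$ zeros and $n_2$ ones (the permutation null distribution), and set $R_1^w=\sum_{(i,j)\in G} w_{ij}\,I(g_i=g_j=0)$, $R_2^w=\sum_{(i,j)\in G} w_{ij}\,I(g_i=g_j=1)$. Let $\mu_k^w=\mathbf{E}(R_k^w)$ and let $\Sigma^w$ be the $2\times 2$ covariance matrix of $(R_1^w,R_2^w)$ under this distribution, assumed invertible, and define $$S_R=(R_1^w-\mu_1^w,\;R_2^w-\mu_2^w)\,(\Sigma^w)^{-1}\begin{pmatrix}R_1^w-\mu_1^w\\ R_2^w-\mu_2^w\end{pmatrix}.$$ Let $p=\frac{n_1-1}{N-2}$, $q=1-p$, and $$Z^R_{\mathrm{diff}}=\frac{(R_1^w-R_2^w)-\mathbf{E}(R_1^w-R_2^w)}{\sqrt{\mathbf{Var}(R_1^w-R_2^w)}},\qquad Z^R_w=\frac{(qR_1^w+pR_2^w)-\mathbf{E}(qR_1^w+pR_2^w)}{\sqrt{\mathbf{Var}(qR_1^w+pR_2^w)}},$$ all moments taken under the permutation null distribution. Then $$S_R=(Z^R_{\mathrm{diff}})^2+(Z^R_w)^2\quad\text{and}\quad \mathbf{Cov}(Z^R_{\mathrm{diff}},Z^R_w)=0 .$$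
   Context: This is the setting of graph-based two-sample tests: the $N$ nodes correspond to the pooled observations of two samples of sizes $n_1$ and $n_2$, $g_i=0$ meaning node $i$ belongs to the first sample and $g_i=1$ to the second. $R_1^w$ and $R_2^w$ are the weighted within-sample edge counts of the first and second samples. Edges are unordered pairs, each counted once in the sums. *)

theory Defs
  imports "HOL-Analysis.Analysis"
begin

definition labelings :: "nat \<Rightarrow> nat \<Rightarrow> (nat \<Rightarrow> nat) set" where
  "labelings n1 n2 = {g \<in> {1..n1+n2} \<rightarrow>\<^sub>E {0,1}. card {i\<in>{1..n1+n2}. g i = 0} = n1}"

definition Ex :: "'a set \<Rightarrow> ('a \<Rightarrow> real) \<Rightarrow> real" where
  "Ex L f = (\<Sum>x\<in>L. f x) / real (card L)"

definition Var :: "'a set \<Rightarrow> ('a \<Rightarrow> real) \<Rightarrow> real" where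
  "Var L f = Ex L (\<lambda>x. (f x - Ex L f)^2)"

definition Cov :: "'a set \<Rightarrow> ('a \<Rightarrow> real) \<Rightarrow> ('a \<Rightarrow> real) \<Rightarrow> real" where
  "Cov L f h = Ex L (\<lambda>x. (f x - Ex L f) * (h x - Ex L h))"

text \<open>Weighted within-sample edge count for label k (edges are 2-element node sets,
  each counted once).\<close>
definition Rw :: "nat set set \<Rightarrow> (nat set \<Rightarrow> real) \<Rightarrow> nat \<Rightarrow> (nat \<Rightarrow> nat) \<Rightarrow> real" where
  "Rw E w k g = (\<Sum>e\<in>E. w e * of_bool (\<forall>i\<in>e. g i = k))"

end

theory Submission
  imports Defs
begin

(*
  Write X_i for the indicator that node i carries label 0, D for the sum over the edges {i,j}
  of w_ij (X_i + X_j) and W for the total weight. Then R1 - R2 = D - W and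
  q R1 + p R2 = R1 - p D + p W. By exchangeability, the moment E(X_i1 ... X_im) of m distinct
  nodes is n1 (n1-1) ... (n1-m+1) / (N (N-1) ... (N-m+1)), and for m <= 3 this gives
  Cov(X_k, X_i X_j) = p (Cov(X_k, X_i) + Cov(X_k, X_j)) for every edge {i,j} and node k.
  Summing over edges and nodes, Cov(D, R1) = p Var D, so R1 - R2 and q R1 + p R2 are
  uncorrelated. The change of variables (R1, R2) -> (R1 - R2, q R1 + p R2) has determinant
  p + q = 1 and diagonalises the covariance matrix, so the quadratic form S_R splits into the
  two squared standardised statistics.
*)

lemma Ex_add: "Ex L (\<lambda>x. f x + h x) = Ex L f + Ex L h"
  by (simp add: Ex_def sum.distrib add_divide_distrib)

lemma Ex_diff: "Ex L (\<lambda>x. f x - h x) = Ex L f - Ex L h"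
  by (simp add: Ex_def sum_subtractf diff_divide_distrib)

lemma Ex_scale: "Ex L (\<lambda>x. c * f x) = c * Ex L f"
  by (simp add: Ex_def sum_distrib_left)

lemma Ex_sum: "Ex L (\<lambda>x. \<Sum>i\<in>I. f i x) = (\<Sum>i\<in>I. Ex L (f i))"
  by (simp add: Ex_def sum.swap[of _ I] sum_divide_distrib)

lemma Ex_const: "finite L \<Longrightarrow> L \<noteq> {} \<Longrightarrow> Ex L (\<lambda>x. c) = c"
  by (simp add: Ex_def)

lemma Ex_cong: "(\<And>x. x \<in> L \<Longrightarrow> f x = h x) \<Longrightarrow> Ex L f = Ex L h"
  by (simp add: Ex_def)

lemma Cov_cong:
  "(\<And>x. x \<in> L \<Longrightarrow> f x = f' x) \<Longrightarrow> (\<And>x. x \<in> L \<Longrightarrow> h x = h' x) \<Longrightarrow> Cov L f h = Cov L f' h'"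
  unfolding Cov_def by (rule Ex_cong) (simp add: Ex_cong[of L f f'] Ex_cong[of L h h'])

lemma Cov_commute: "Cov L f h = Cov L h f"
  by (simp add: Cov_def mult.commute)

lemma Var_eq_Cov: "Var L f = Cov L f f"
  by (simp add: Var_def Cov_def power2_eq_square)

lemma Var_nonneg: "Var L f \<ge> 0"
  by (simp add: Var_def Ex_def sum_nonneg)

lemma Cov_eq_Ex_mult:
  assumes "finite L" "L \<noteq> {}"
  shows "Cov L f h = Ex L (\<lambda>x. f x * h x) - Ex L f * Ex L h"
proof -
  have "Cov L f h = Ex L (\<lambda>x. f x * h x - Ex L h * f x - (Ex L f * h x - Ex L f * Ex L h))"
    unfolding Cov_def by (rule Ex_cong) (simp add: algebra_simps)
  then show ?thesis
    by (simp add: Ex_diff Ex_scale Ex_const[OF assms])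
qed

lemma Cov_add_left: "Cov L (\<lambda>x. f x + g x) h = Cov L f h + Cov L g h"
proof -
  have "Cov L (\<lambda>x. f x + g x) h
      = Ex L (\<lambda>x. (f x - Ex L f) * (h x - Ex L h) + (g x - Ex L g) * (h x - Ex L h))"
    unfolding Cov_def Ex_add[where f=f and h=g] by (rule Ex_cong) (simp add: algebra_simps)
  also have "\<dots> = Cov L f h + Cov L g h"
    unfolding Cov_def by (rule Ex_add)
  finally show ?thesis .
qed

lemma Cov_diff_left: "Cov L (\<lambda>x. f x - g x) h = Cov L f h - Cov L g h"
proof -
  have "Cov L (\<lambda>x. f x - g x) h
      = Ex L (\<lambda>x. (f x - Ex L f) * (h x - Ex L h) - (g x - Ex L g) * (h x - Ex L h))"
    unfolding Cov_def Ex_diff[where f=f and h=g] by (rule Ex_cong) (simp add: algebra_simps)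
  also have "\<dots> = Cov L f h - Cov L g h"
    unfolding Cov_def by (rule Ex_diff)
  finally show ?thesis .
qed

lemma Cov_scale_left: "Cov L (\<lambda>x. c * f x) h = c * Cov L f h"
proof -
  have "Cov L (\<lambda>x. c * f x) h = Ex L (\<lambda>x. c * ((f x - Ex L f) * (h x - Ex L h)))"
    unfolding Cov_def Ex_scale[where f=f] by (rule Ex_cong) (simp add: algebra_simps)
  also have "\<dots> = c * Cov L f h"
    unfolding Cov_def by (rule Ex_scale)
  finally show ?thesis .
qed

lemma Cov_divide_left: "Cov L (\<lambda>x. f x / c) h = Cov L f h / c"
  using Cov_scale_left[of L "inverse c" f h] by (simp add: field_simps)

lemma Cov_sum_left: "Cov L (\<lambda>x. \<Sum>i\<in>I. f i x) h = (\<Sum>i\<in>I. Cov L (f i) h)"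
proof -
  have "Cov L (\<lambda>x. \<Sum>i\<in>I. f i x) h = Ex L (\<lambda>x. \<Sum>i\<in>I. (f i x - Ex L (f i)) * (h x - Ex L h))"
    unfolding Cov_def Ex_sum[where f=f and I=I]
    by (rule Ex_cong) (simp add: sum_distrib_right flip: sum_subtractf)
  also have "\<dots> = (\<Sum>i\<in>I. Cov L (f i) h)"
    unfolding Cov_def by (rule Ex_sum)
  finally show ?thesis .
qed

lemma Cov_const_left: "Cov L (\<lambda>x. c) h = 0"
proof (cases "finite L \<and> L \<noteq> {}")
  case True
  then show ?thesis by (simp add: Cov_eq_Ex_mult Ex_scale Ex_const)
next
  case False
  then show ?thesis by (auto simp: Cov_def Ex_def)
qed

lemma Cov_add_right: "Cov L h (\<lambda>x. f x + g x) = Cov L h f + Cov L h g"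
  by (simp only: Cov_commute[of L h] Cov_add_left)

lemma Cov_diff_right: "Cov L h (\<lambda>x. f x - g x) = Cov L h f - Cov L h g"
  by (simp only: Cov_commute[of L h] Cov_diff_left)

lemma Cov_scale_right: "Cov L h (\<lambda>x. c * f x) = c * Cov L h f"
  by (simp only: Cov_commute[of L h] Cov_scale_left)

lemma Cov_divide_right: "Cov L h (\<lambda>x. f x / c) = Cov L h f / c"
  by (simp only: Cov_commute[of L h] Cov_divide_left)

lemma Cov_sum_right: "Cov L h (\<lambda>x. \<Sum>i\<in>I. f i x) = (\<Sum>i\<in>I. Cov L h (f i))"
  by (simp only: Cov_commute[of L h] Cov_sum_left)

lemma Cov_const_right: "Cov L h (\<lambda>x. c) = 0"
  by (simp only: Cov_commute[of L h] Cov_const_left)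

lemmas Cov_linear =
  Cov_add_left Cov_diff_left Cov_scale_left Cov_divide_left Cov_sum_left Cov_const_left
  Cov_add_right Cov_diff_right Cov_scale_right Cov_divide_right Cov_sum_right Cov_const_right

lemma Cov_standardise: "Cov L (\<lambda>x. (f x - a) / s) (\<lambda>x. (h x - b) / t) = Cov L f h / (s * t)"
  by (simp add: Cov_linear)

lemma matrix_mul_matrix_inv: "invertible A \<Longrightarrow> A ** matrix_inv A = mat 1"
  unfolding invertible_def matrix_inv_def by (rule someI2_ex) auto

(* The last hypothesis says that x1 - x2 and q x1 + p x2 are uncorrelated when (x1, x2) has
   covariance matrix S; the change of variables to them then diagonalises the quadratic form. *)
lemma quadratic_form_inverse_2x2_uncorrelated:
  fixes v1 v2 c p q a b :: real
  defines "S \<equiv> vector [vector [v1, c], vector [c, v2]] :: real^2^2"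
  assumes "invertible S" and "q = 1 - p" and "q * v1 + p * c = q * c + p * v2"
  shows "vector [a, b] \<bullet> (matrix_inv S *v vector [a, b])
    = (a - b)^2 / (v1 - 2 * c + v2) + (q * a + p * b)^2 / (q^2 * v1 + 2 * p * q * c + p^2 * v2)"
proof -
  define y where "y = matrix_inv S *v vector [a, b]"
  have "S *v y = vector [a, b]"
    by (simp add: y_def matrix_vector_mul_assoc matrix_mul_matrix_inv[OF assms(2)])
  then have y1: "v1 * y$1 + c * y$2 = a" and y2: "c * y$1 + v2 * y$2 = b"
    by (auto simp: S_def matrix_vector_mult_def sum_2 vec_eq_iff forall_2)
  have "(v1 - 2 * c + v2) * (q^2 * v1 + 2 * p * q * c + p^2 * v2) = v1 * v2 - c * c"
    using assms(3,4) by algebra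
  also have "\<dots> = det S"
    by (simp add: S_def det_2)
  also have "det S \<noteq> 0"
    using assms(2) invertible_det_nz by blast
  finally have nz: "v1 - 2 * c + v2 \<noteq> 0" "q^2 * v1 + 2 * p * q * c + p^2 * v2 \<noteq> 0"
    by auto
  have "(a * y$1 + b * y$2) * ((v1 - 2 * c + v2) * (q^2 * v1 + 2 * p * q * c + p^2 * v2))
      = (a - b)^2 * (q^2 * v1 + 2 * p * q * c + p^2 * v2) + (q * a + p * b)^2 * (v1 - 2 * c + v2)"
    unfolding y1[symmetric] y2[symmetric] using assms(3,4) by algebra
  then have "a * y$1 + b * y$2
      = ((a - b)^2 * (q^2 * v1 + 2 * p * q * c + p^2 * v2) + (q * a + p * b)^2 * (v1 - 2 * c + v2))
        / ((v1 - 2 * c + v2) * (q^2 * v1 + 2 * p * q * c + p^2 * v2))"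
    using nz by (simp add: eq_divide_eq)
  also have "\<dots> = (a - b)^2 / (v1 - 2 * c + v2) + (q * a + p * b)^2 / (q^2 * v1 + 2 * p * q * c + p^2 * v2)"
    using nz by (simp add: add_divide_distrib)
  finally show ?thesis
    by (simp add: y_def[symmetric] inner_vec_def sum_2)
qed

lemma finite_labelings: "finite (labelings n1 n2)"
proof (rule finite_subset)
  show "labelings n1 n2 \<subseteq> {1..n1+n2} \<rightarrow>\<^sub>E {0,1}"
    by (auto simp: labelings_def)
qed (simp add: finite_PiE)

lemma labelings_nonempty: "labelings n1 n2 \<noteq> {}"
proof -
  define g :: "nat \<Rightarrow> nat" where "g = (\<lambda>i. if i \<in> {1..n1+n2} then if i \<le> n1 then 0 else 1 else undefined)"
  have "{i \<in> {1..n1+n2}. g i = 0} = {1..n1}"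
    by (auto simp: g_def)
  then have "g \<in> labelings n1 n2"
    by (auto simp: labelings_def g_def PiE_iff extensional_def)
  then show ?thesis by blast
qed

lemma labelings_range: "g \<in> labelings n1 n2 \<Longrightarrow> i \<in> {1..n1+n2} \<Longrightarrow> g i = 0 \<or> g i = 1"
  by (auto simp: labelings_def PiE_iff)

lemma comp_permutes_labelings:
  assumes "\<pi> permutes {1..n1+n2}" and "g \<in> labelings n1 n2"
  shows "g \<circ> \<pi> \<in> labelings n1 n2"
proof -
  let ?V = "{1..n1+n2}"
  have g: "g \<in> ?V \<rightarrow>\<^sub>E {0,1}" "card {i \<in> ?V. g i = 0} = n1"
    using assms(2) by (auto simp: labelings_def)
  have "g \<circ> \<pi> \<in> ?V \<rightarrow>\<^sub>E {0,1}"
    using g(1) permutes_in_image[OF assms(1)] permutes_not_in[OF assms(1)]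
    by (auto simp: PiE_iff extensional_def)
  moreover have "\<pi> ` {i \<in> ?V. g (\<pi> i) = 0} = {i \<in> ?V. g i = 0}"
  proof
    show "\<pi> ` {i \<in> ?V. g (\<pi> i) = 0} \<subseteq> {i \<in> ?V. g i = 0}"
      using permutes_in_image[OF assms(1)] by auto
    show "{i \<in> ?V. g i = 0} \<subseteq> \<pi> ` {i \<in> ?V. g (\<pi> i) = 0}"
    proof
      fix j assume j: "j \<in> {i \<in> ?V. g i = 0}"
      have "\<pi> (inv \<pi> j) = j"
        by (rule permutes_inverses(1)[OF assms(1)])
      moreover have "inv \<pi> j \<in> ?V"
        using j permutes_in_image[OF permutes_inv[OF assms(1)]] by blast
      ultimately show "j \<in> \<pi> ` {i \<in> ?V. g (\<pi> i) = 0}"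
        using j by (metis (mono_tags, lifting) image_eqI mem_Collect_eq)
    qed
  qed
  then have "card {i \<in> ?V. g (\<pi> i) = 0} = n1"
    using g(2) card_image[OF inj_on_subset[OF permutes_inj[OF assms(1)] subset_UNIV],
        of "{i \<in> ?V. g (\<pi> i) = 0}"]
    by simp
  ultimately show ?thesis
    by (simp add: labelings_def)
qed

lemma Ex_labelings_comp_permutes:
  assumes "\<pi> permutes {1..n1+n2}"
  shows "Ex (labelings n1 n2) f = Ex (labelings n1 n2) (\<lambda>g. f (g \<circ> \<pi>))"
proof -
  have "(\<Sum>g\<in>labelings n1 n2. f (g \<circ> \<pi>)) = (\<Sum>g\<in>labelings n1 n2. f g)"
    by (rule sum.reindex_bij_witness[where i="\<lambda>g. g \<circ> inv \<pi>" and j="\<lambda>g. g \<circ> \<pi>"])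
      (auto simp: comp_assoc permutes_inv_o[OF assms]
        intro: comp_permutes_labelings[OF assms] comp_permutes_labelings[OF permutes_inv[OF assms]])
  then show ?thesis
    by (simp add: Ex_def)
qed

definition ind0 :: "nat \<Rightarrow> (nat \<Rightarrow> nat) \<Rightarrow> real" where
  "ind0 i g = of_bool (g i = 0)"

lemma ind0_comp: "ind0 i (g \<circ> \<pi>) = ind0 (\<pi> i) g"
  by (simp add: ind0_def)

lemma prod_ind0_eq_of_bool: "finite S \<Longrightarrow> (\<Prod>i\<in>S. ind0 i g) = of_bool (\<forall>i\<in>S. g i = 0)"
  by (induction S rule: finite_induct) (auto simp: ind0_def)

lemma ind0_mult_prod_ind0:
  "finite S \<Longrightarrow> ind0 k g * (\<Prod>i\<in>S. ind0 i g) = (\<Prod>i\<in>insert k S. ind0 i g)"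
  using prod_ind0_eq_of_bool[of S g] prod_ind0_eq_of_bool[of "insert k S" g] by (auto simp: ind0_def)

lemma prod_ind0_mult_sum_ind0:
  assumes "finite S"
  shows "(\<Prod>i\<in>S. ind0 i g) * (\<Sum>i\<in>S. ind0 i g) = real (card S) * (\<Prod>i\<in>S. ind0 i g)"
proof (cases "\<forall>i\<in>S. g i = 0")
  case True
  then have "(\<Sum>i\<in>S. ind0 i g) = real (card S)"
    by (simp add: ind0_def)
  then show ?thesis by simp
next
  case False
  then show ?thesis
    using assms by (simp add: prod_ind0_eq_of_bool)
qed

lemma sum_ind0_labelings:
  assumes "g \<in> labelings n1 n2"
  shows "(\<Sum>i\<in>{1..n1+n2}. ind0 i g) = real n1"
proof -
  have "(\<Sum>i\<in>{1..n1+n2}. ind0 i g) = real (card ({1..n1+n2} \<inter> {i. g i = 0}))"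
    unfolding ind0_def by (intro sum_of_bool_eq finite_atLeastAtMost)
  also have "{1..n1+n2} \<inter> {i. g i = 0} = {i \<in> {1..n1+n2}. g i = 0}"
    by blast
  finally show ?thesis
    using assms by (simp add: labelings_def)
qed

lemma Ex_prod_ind0_insert:
  assumes "S \<subseteq> {1..n1+n2}" and "k \<in> {1..n1+n2}" and "k \<notin> S"
  shows "(real (n1+n2) - card S) * Ex (labelings n1 n2) (\<lambda>g. \<Prod>i\<in>insert k S. ind0 i g)
       = (real n1 - card S) * Ex (labelings n1 n2) (\<lambda>g. \<Prod>i\<in>S. ind0 i g)"
proof -
  \<comment> \<open>By exchangeability all choices of the new node l give the same moment ?m l, and
     their sum is computed pointwise from the fact that exactly n1 nodes carry label 0.\<close>
  let ?V = "{1..n1+n2}" and ?L = "labelings n1 n2"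
  let ?m = "\<lambda>l. Ex ?L (\<lambda>g. \<Prod>i\<in>insert l S. ind0 i g)"
  have S: "finite S" "card S \<le> n1 + n2"
    using assms(1) finite_subset card_mono[OF _ assms(1)] by auto
  have swap: "?m l = ?m k" if l: "l \<in> ?V - S" for l
  proof -
    have "Transposition.transpose k l permutes ?V"
      using l assms(2) by (intro permutes_swap_id) auto
    then have "?m l = Ex ?L (\<lambda>g. (\<Prod>i\<in>insert l S. ind0 i (g \<circ> Transposition.transpose k l)))"
      by (rule Ex_labelings_comp_permutes[where f="\<lambda>g. \<Prod>i\<in>insert l S. ind0 i g"])
    also have "\<dots> = ?m k"
      using l assms S(1)
      by (intro Ex_cong) (auto simp: ind0_comp Transposition.transpose_def intro!: prod.cong)
    finally show ?thesis .
  qed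
  have "real (card (?V - S)) * ?m k = (\<Sum>l\<in>?V - S. ?m l)"
    using swap by simp
  also have "\<dots> = Ex ?L (\<lambda>g. (\<Prod>i\<in>S. ind0 i g) * (\<Sum>l\<in>?V - S. ind0 l g))"
    using S(1) by (simp add: Ex_sum sum_distrib_left mult.commute)
  also have "\<dots> = Ex ?L (\<lambda>g. (real n1 - card S) * (\<Prod>i\<in>S. ind0 i g))"
  proof (rule Ex_cong)
    fix g assume "g \<in> ?L"
    then have rest: "(\<Sum>l\<in>?V - S. ind0 l g) = real n1 - (\<Sum>l\<in>S. ind0 l g)"
      using assms(1) sum_ind0_labelings[of g] by (simp add: sum_diff)
    show "(\<Prod>i\<in>S. ind0 i g) * (\<Sum>l\<in>?V - S. ind0 l g) = (real n1 - card S) * (\<Prod>i\<in>S. ind0 i g)"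
      unfolding rest right_diff_distrib prod_ind0_mult_sum_ind0[OF S(1)] by (simp add: algebra_simps)
  qed
  also have "\<dots> = (real n1 - card S) * Ex ?L (\<lambda>g. \<Prod>i\<in>S. ind0 i g)"
    by (rule Ex_scale)
  finally show ?thesis
    using assms(1) S by (simp add: card_Diff_subset of_nat_diff)
qed

definition prob_all0 :: "nat \<Rightarrow> nat \<Rightarrow> nat \<Rightarrow> real" where
  "prob_all0 n1 n2 m = (\<Prod>t<m. (real n1 - real t) / (real (n1+n2) - real t))"

lemma prob_all0_1: "prob_all0 n1 n2 1 = real n1 / real (n1+n2)"
  and prob_all0_2: "prob_all0 n1 n2 2 = real n1 / real (n1+n2) * ((real n1 - 1) / (real (n1+n2) - 1))"
  and prob_all0_3: "prob_all0 n1 n2 3 = real n1 / real (n1+n2) * ((real n1 - 1) / (real (n1+n2) - 1))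
                                          * ((real n1 - 2) / (real (n1+n2) - 2))"
  by (simp_all add: prob_all0_def numeral_2_eq_2 numeral_3_eq_3 prod.lessThan_Suc)

lemma Ex_prod_ind0:
  assumes "S \<subseteq> {1..n1+n2}"
  shows "Ex (labelings n1 n2) (\<lambda>g. \<Prod>i\<in>S. ind0 i g) = prob_all0 n1 n2 (card S)"
proof -
  have "finite S"
    using assms finite_subset by blast
  then show ?thesis
    using assms
  proof (induction S rule: finite_subset_induct')
    case empty
    then show ?case
      by (simp add: Ex_const finite_labelings labelings_nonempty prob_all0_def)
  next
    case (insert k S)
    have k: "S \<subseteq> {1..n1+n2}" "k \<in> {1..n1+n2}" "k \<notin> S"
      using insert by auto
    then have "S \<subset> {1..n1+n2}"
      by auto
    then have "card S < n1 + n2"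
      using psubset_card_mono[of "{1..n1+n2}" S] by simp
    then show ?case
      using Ex_prod_ind0_insert[OF k] insert by (simp add: prob_all0_def field_simps)
  qed
qed

lemma Cov_ind0_prod_ind0:
  assumes "A \<subseteq> {1..n1+n2}" and "k \<in> {1..n1+n2}"
  shows "Cov (labelings n1 n2) (ind0 k) (\<lambda>g. \<Prod>i\<in>A. ind0 i g)
       = prob_all0 n1 n2 (card (insert k A)) - prob_all0 n1 n2 1 * prob_all0 n1 n2 (card A)"
proof -
  let ?L = "labelings n1 n2"
  have "finite A"
    using assms(1) finite_subset by blast
  then have "Ex ?L (\<lambda>g. ind0 k g * (\<Prod>i\<in>A. ind0 i g)) = Ex ?L (\<lambda>g. \<Prod>i\<in>insert k A. ind0 i g)"
    by (simp add: ind0_mult_prod_ind0)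
  moreover have "Ex ?L (ind0 k) = Ex ?L (\<lambda>g. \<Prod>i\<in>{k}. ind0 i g)"
    by simp
  ultimately show ?thesis
    using assms Ex_prod_ind0[of "insert k A"] Ex_prod_ind0[of "{k}"] Ex_prod_ind0[of A]
    by (simp add: Cov_eq_Ex_mult finite_labelings labelings_nonempty)
qed

lemma falling_ratio_identities:
  fixes n M M1 M2 :: real
  assumes "M \<noteq> 0" "M1 \<noteq> 0" "M2 \<noteq> 0" and "M1 = M - 1" "M2 = M - 2"
  defines "P1 \<equiv> n / M" and "P2 \<equiv> n / M * ((n - 1) / M1)"
  defines "P3 \<equiv> P2 * ((n - 2) / M2)"
  shows "P2 - P1 * P2 = (n - 1) / M2 * ((P1 - P1^2) + (P2 - P1^2))"
    and "P3 - P1 * P2 = (n - 1) / M2 * (2 * (P2 - P1^2))"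
  \<comment> \<open>M - 1 and M - 2 are kept abstract so that field_simps can clear the denominators.\<close>
  unfolding P3_def P2_def P1_def
   apply (simp_all add: field_simps power2_eq_square assms(1-3))
   apply (simp_all only: assms(4,5))
   apply algebra+
  done

lemma prob_all0_edge_identities:
  assumes "n1 + n2 \<ge> 3"
  defines "p \<equiv> (real n1 - 1) / (real (n1+n2) - 2)"
  shows "prob_all0 n1 n2 2 - prob_all0 n1 n2 1 * prob_all0 n1 n2 2
         = p * ((prob_all0 n1 n2 1 - prob_all0 n1 n2 1 ^ 2) + (prob_all0 n1 n2 2 - prob_all0 n1 n2 1 ^ 2))"
    and "prob_all0 n1 n2 3 - prob_all0 n1 n2 1 * prob_all0 n1 n2 2
         = p * (2 * (prob_all0 n1 n2 2 - prob_all0 n1 n2 1 ^ 2))"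
proof -
  have "real (n1+n2) \<noteq> 0" "real (n1+n2) - 1 \<noteq> 0" "real (n1+n2) - 2 \<noteq> 0"
    using assms(1) by linarith+
  note identities = falling_ratio_identities[OF this refl refl, of "real n1"]
  show "prob_all0 n1 n2 2 - prob_all0 n1 n2 1 * prob_all0 n1 n2 2
         = p * ((prob_all0 n1 n2 1 - prob_all0 n1 n2 1 ^ 2) + (prob_all0 n1 n2 2 - prob_all0 n1 n2 1 ^ 2))"
    unfolding prob_all0_1 prob_all0_2 p_def by (rule identities(1))
  show "prob_all0 n1 n2 3 - prob_all0 n1 n2 1 * prob_all0 n1 n2 2
         = p * (2 * (prob_all0 n1 n2 2 - prob_all0 n1 n2 1 ^ 2))"
    unfolding prob_all0_1 prob_all0_2 prob_all0_3 p_def by (rule identities(2))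
qed

lemma Cov_ind0_edge:
  assumes "n1 + n2 \<ge> 3" and "k \<in> {1..n1+n2}" and "e \<subseteq> {1..n1+n2}" and "card e = 2"
  shows "Cov (labelings n1 n2) (ind0 k) (\<lambda>g. \<Prod>i\<in>e. ind0 i g)
       = (real n1 - 1) / (real (n1+n2) - 2) * Cov (labelings n1 n2) (ind0 k) (\<lambda>g. \<Sum>i\<in>e. ind0 i g)"
proof -
  let ?L = "labelings n1 n2" and ?P = "prob_all0 n1 n2"
  obtain i j where e: "e = {i, j}" "i \<noteq> j"
    using assms(4) unfolding card_2_iff by blast
  have ij: "i \<in> {1..n1+n2}" "j \<in> {1..n1+n2}"
    using assms(3) e by auto
  have single: "Cov ?L (ind0 k) (ind0 l) = ?P (if k = l then 1 else 2) - ?P 1 * ?P 1"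
    if "l \<in> {1..n1+n2}" for l
  proof -
    have "Cov ?L (ind0 k) (\<lambda>g. \<Prod>i\<in>{l}. ind0 i g) = ?P (card (insert k {l})) - ?P 1 * ?P (card {l})"
      using that assms(2) by (intro Cov_ind0_prod_ind0) auto
    moreover have "card (insert k {l}) = (if k = l then 1 else 2)"
      by simp
    ultimately show ?thesis
      by simp
  qed
  have sum_e: "Cov ?L (ind0 k) (\<lambda>g. \<Sum>i\<in>e. ind0 i g) = Cov ?L (ind0 k) (ind0 i) + Cov ?L (ind0 k) (ind0 j)"
    using e by (simp add: Cov_add_right)
  have prod_e: "Cov ?L (ind0 k) (\<lambda>g. \<Prod>i\<in>e. ind0 i g) = ?P (card (insert k e)) - ?P 1 * ?P 2"
    using Cov_ind0_prod_ind0[OF assms(3,2)] unfolding assms(4) .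
  show ?thesis
  proof (cases "k \<in> e")
    case True
    then have "card (insert k e) = 2"
      by (simp add: insert_absorb assms(4))
    moreover have "Cov ?L (ind0 k) (ind0 i) + Cov ?L (ind0 k) (ind0 j) = (?P 1 - ?P 1 ^ 2) + (?P 2 - ?P 1 ^ 2)"
      using True e single[OF ij(1)] single[OF ij(2)] by (auto simp: power2_eq_square)
    ultimately show ?thesis
      unfolding sum_e prod_e using prob_all0_edge_identities(1)[OF assms(1)] by simp
  next
    case False
    then have "card (insert k e) = 3"
      using assms(4) e by simp
    moreover have "Cov ?L (ind0 k) (ind0 i) + Cov ?L (ind0 k) (ind0 j) = 2 * (?P 2 - ?P 1 ^ 2)"
      using False e single[OF ij(1)] single[OF ij(2)] by (simp add: power2_eq_square)
    ultimately show ?thesis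
      unfolding sum_e prod_e using prob_all0_edge_identities(2)[OF assms(1)] by simp
  qed
qed

definition Dw :: "nat set set \<Rightarrow> (nat set \<Rightarrow> real) \<Rightarrow> (nat \<Rightarrow> nat) \<Rightarrow> real" where
  "Dw E w g = (\<Sum>e\<in>E. w e * (\<Sum>i\<in>e. ind0 i g))"

lemma Rw0_eq_sum_prod_ind0:
  assumes "\<forall>e\<in>E. finite e"
  shows "Rw E w 0 = (\<lambda>g. \<Sum>e\<in>E. w e * (\<Prod>i\<in>e. ind0 i g))"
  unfolding Rw_def using assms by (intro ext sum.cong refl) (simp add: prod_ind0_eq_of_bool)

lemma Rw1_eq:
  assumes "g \<in> labelings n1 n2" and "\<forall>e\<in>E. e \<subseteq> {1..n1+n2} \<and> card e = 2"
  shows "Rw E w 1 g = (\<Sum>e\<in>E. w e) - Dw E w g + Rw E w 0 g"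
proof -
  have "Rw E w 1 g = (\<Sum>e\<in>E. w e - w e * (\<Sum>i\<in>e. ind0 i g) + w e * of_bool (\<forall>i\<in>e. g i = 0))"
    unfolding Rw_def
  proof (intro sum.cong refl)
    fix e assume "e \<in> E"
    then have "card e = 2" "e \<subseteq> {1..n1+n2}"
      using assms(2) by auto
    then obtain i j where e: "e = {i, j}" "i \<noteq> j" "i \<in> {1..n1+n2}" "j \<in> {1..n1+n2}"
      unfolding card_2_iff by auto
    then have "g i = 0 \<or> g i = 1" "g j = 0 \<or> g j = 1"
      using labelings_range[OF assms(1)] by auto
    then show "w e * of_bool (\<forall>i\<in>e. g i = 1)
        = w e - w e * (\<Sum>i\<in>e. ind0 i g) + w e * of_bool (\<forall>i\<in>e. g i = 0)"
      using e by (auto simp: ind0_def)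
  qed
  then show ?thesis
    by (simp add: Rw_def Dw_def sum.distrib sum_subtractf)
qed

lemma Cov_Dw_right: "Cov L f (Dw E w) = (\<Sum>e\<in>E. w e * Cov L f (\<lambda>g. \<Sum>i\<in>e. ind0 i g))"
  by (simp only: Dw_def[abs_def] Cov_sum_right Cov_scale_right)

lemma Cov_Dw_Rw0:
  assumes "n1 + n2 \<ge> 3" and edges: "\<forall>e\<in>E. e \<subseteq> {1..n1+n2} \<and> card e = 2"
  defines "p \<equiv> (real n1 - 1) / (real (n1+n2) - 2)"
  shows "Cov (labelings n1 n2) (Dw E w) (Rw E w 0) = p * Var (labelings n1 n2) (Dw E w)"
proof -
  let ?L = "labelings n1 n2"
  have edge: "Cov ?L (Dw E w) (\<lambda>g. \<Prod>i\<in>e. ind0 i g) = p * Cov ?L (Dw E w) (\<lambda>g. \<Sum>i\<in>e. ind0 i g)"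
    if "e \<in> E" for e
  proof -
    have "Cov ?L (ind0 k) (\<lambda>g. \<Prod>i\<in>e. ind0 i g) = p * Cov ?L (ind0 k) (\<lambda>g. \<Sum>i\<in>e. ind0 i g)"
      if "k \<in> e'" "e' \<in> E" for k e'
    proof -
      have "e' \<subseteq> {1..n1+n2}" "e \<subseteq> {1..n1+n2}" "card e = 2"
        using edges that(2) \<open>e \<in> E\<close> by auto
      then show ?thesis
        using that(1) unfolding p_def by (intro Cov_ind0_edge assms(1)) auto
    qed
    then show ?thesis
      unfolding Dw_def by (simp add: Cov_sum_left Cov_scale_left sum_distrib_left mult_ac)
  qed
  have "Cov ?L (Dw E w) (Rw E w 0) = (\<Sum>e\<in>E. w e * Cov ?L (Dw E w) (\<lambda>g. \<Prod>i\<in>e. ind0 i g))"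
  proof -
    have "\<forall>e\<in>E. finite e"
      using edges by (metis card.infinite zero_neq_numeral)
    then show ?thesis
      by (simp add: Rw0_eq_sum_prod_ind0 Cov_sum_right Cov_scale_right)
  qed
  also have "\<dots> = p * (\<Sum>e\<in>E. w e * Cov ?L (Dw E w) (\<lambda>g. \<Sum>i\<in>e. ind0 i g))"
    by (simp add: edge sum_distrib_left mult_ac cong: sum.cong)
  also have "\<dots> = p * Var ?L (Dw E w)"
    by (simp add: Var_eq_Cov Cov_Dw_right[of ?L "Dw E w"])
  finally show ?thesis .
qed

lemma Cov_Rw_diff_Rw_weighted_eq_0:
  assumes "n1 + n2 \<ge> 3" and edges: "\<forall>e\<in>E. e \<subseteq> {1..n1+n2} \<and> card e = 2"
    and p: "p = (real n1 - 1) / (real (n1+n2) - 2)"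
  shows "Cov (labelings n1 n2) (\<lambda>g. Rw E w 0 g - Rw E w 1 g)
           (\<lambda>g. (1 - p) * Rw E w 0 g + p * Rw E w 1 g) = 0"
proof -
  let ?L = "labelings n1 n2" and ?W = "\<Sum>e\<in>E. w e"
  have "Cov ?L (\<lambda>g. Rw E w 0 g - Rw E w 1 g) (\<lambda>g. (1 - p) * Rw E w 0 g + p * Rw E w 1 g)
      = Cov ?L (\<lambda>g. Dw E w g - ?W) (\<lambda>g. Rw E w 0 g - p * Dw E w g + p * ?W)"
  proof (rule Cov_cong)
    fix g assume "g \<in> ?L"
    note R1 = Rw1_eq[OF this edges]
    show "Rw E w 0 g - Rw E w 1 g = Dw E w g - ?W"
      unfolding R1 by simp
    show "(1 - p) * Rw E w 0 g + p * Rw E w 1 g = Rw E w 0 g - p * Dw E w g + p * ?W"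
      unfolding R1 by (simp add: algebra_simps)
  qed
  also have "\<dots> = Cov ?L (Dw E w) (Rw E w 0) - p * Var ?L (Dw E w)"
    by (simp add: Cov_linear Var_eq_Cov)
  finally show ?thesis
    using Cov_Dw_Rw0[OF assms(1) edges] p by simp
qed

theorem theorem1:
  fixes n1 n2 N :: nat and E :: "nat set set" and w :: "nat set \<Rightarrow> real"
  assumes "n1 \<ge> 2" and "n2 \<ge> 2" and "N = n1 + n2" and "N \<ge> 4"
    and "E \<subseteq> {{i, j} | i j. i \<in> {1..N} \<and> j \<in> {1..N} \<and> i \<noteq> j}"
  defines "L \<equiv> labelings n1 n2"
    and "R1 \<equiv> Rw E w 0" and "R2 \<equiv> Rw E w 1"
  defines "Sig \<equiv> (vector [vector [Var L R1, Cov L R1 R2], vector [Cov L R2 R1, Var L R2]]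
                    :: real^2^2)"
  assumes "invertible Sig"
  defines "SR \<equiv> (\<lambda>g. let d = (vector [R1 g - Ex L R1, R2 g - Ex L R2] :: real^2)
                       in d \<bullet> (matrix_inv Sig *v d))"
    and "p \<equiv> real (n1 - 1) / real (N - 2)"
  defines "q \<equiv> 1 - p"
  defines "Zdiff \<equiv> (\<lambda>g. ((R1 g - R2 g) - Ex L (\<lambda>h. R1 h - R2 h))
                         / sqrt (Var L (\<lambda>h. R1 h - R2 h)))"
    and "Zw \<equiv> (\<lambda>g. ((q * R1 g + p * R2 g) - Ex L (\<lambda>h. q * R1 h + p * R2 h))
                         / sqrt (Var L (\<lambda>h. q * R1 h + p * R2 h)))"
  shows "(\<forall>g\<in>L. SR g = (Zdiff g)^2 + (Zw g)^2) \<and> Cov L Zdiff Zw = 0"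
proof -
  have edges: "\<forall>e\<in>E. e \<subseteq> {1..n1+n2} \<and> card e = 2"
    using assms(3,5) by auto
  have "p = (real n1 - 1) / (real (n1+n2) - 2)"
    using assms(1-3) by (simp add: p_def of_nat_diff)
  then have uncorrelated: "Cov L (\<lambda>g. R1 g - R2 g) (\<lambda>g. q * R1 g + p * R2 g) = 0"
    using Cov_Rw_diff_Rw_weighted_eq_0[OF _ edges] assms(1-3) by (simp add: L_def R1_def R2_def q_def)
  then have "Cov L Zdiff Zw = 0"
    by (simp add: Zdiff_def Zw_def Cov_standardise)
  moreover have "SR g = (Zdiff g)^2 + (Zw g)^2" for g
  proof -
    have Sig: "Sig = vector [vector [Var L R1, Cov L R1 R2], vector [Cov L R1 R2, Var L R2]]"
      by (simp add: Sig_def Cov_commute[of L R2 R1])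
    have "q * Var L R1 + p * Cov L R1 R2 = q * Cov L R1 R2 + p * Var L R2"
      using uncorrelated by (simp add: Cov_linear Var_eq_Cov Cov_commute[of L R2 R1] algebra_simps)
    from quadratic_form_inverse_2x2_uncorrelated[OF \<open>invertible Sig\<close>[unfolded Sig]
        q_def[THEN meta_eq_to_obj_eq] this, where a="R1 g - Ex L R1" and b="R2 g - Ex L R2"]
    have "SR g = ((R1 g - Ex L R1) - (R2 g - Ex L R2))^2 / Var L (\<lambda>h. R1 h - R2 h)
               + (q * (R1 g - Ex L R1) + p * (R2 g - Ex L R2))^2 / Var L (\<lambda>h. q * R1 h + p * R2 h)"
      by (simp add: SR_def Sig Var_eq_Cov Cov_linear Cov_commute[of L R2 R1] power2_eq_square algebra_simps)
    also have "\<dots> = (Zdiff g)^2 + (Zw g)^2"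
      by (simp add: Zdiff_def Zw_def power_divide Var_nonneg Ex_diff Ex_add Ex_scale algebra_simps)
    finally show ?thesis .
  qed
  ultimately show ?thesis
    by blast
qed

end
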